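(* Let $A$ be a quasi-quantale and let $j$ be a contextual nucleus on $A$. Let $A_j=\{a\in A\mid j(a)=a\}$, which is a complete lattice whose join of $X\subseteq A_j$ is $\bigvee^j X=j(\bigvee X)$, and define on $A_j$ the operation $a\cdot b=j(ab)$. Then $(A_j,\cdot)$ is a quasi-quantale. If moreover $A$ is a left-unital quasi-quantale with identity $e$ (i.e. $ea=a$ for all $a\in A$), then $A_j$ is a left-unital quasi-quantale with identity $j(e)$.
   Context: A quasi-quantale is a complete lattice $A$ equipped with an associative binary operation $(a,b)\mapsto ab$ such that for every directed subset $X\subseteq A$ (non-empty, and any two elements of $X$ have an upper bound in $X$) and every $a\in A$: $(\bigvee X)a=\bigvee\{xa\mid x\in X\}$ and $a(\bigvee X)=\bigvee\{ax\mid x\in X\}$. An inflator on $A$ is a monotone map $s\colon A\to A$ with $a\leq s(a)$ for all $a$. A contextual nucleus is an inflator $j$ with $j\circ j=j$ and $j(a)j(b)\leq j(ab)$ for all $a,b\in A$. *)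

theory Defs
  imports Main
begin

definition directed :: "'a::order set \<Rightarrow> bool" where
  "directed X \<longleftrightarrow> X \<noteq> {} \<and> (\<forall>x\<in>X. \<forall>y\<in>X. \<exists>z\<in>X. x \<le> z \<and> y \<le> z)"

definition quasi_quantale_on ::
  "'a::complete_lattice set \<Rightarrow> ('a set \<Rightarrow> 'a) \<Rightarrow> ('a \<Rightarrow> 'a \<Rightarrow> 'a) \<Rightarrow> bool" where
  "quasi_quantale_on S J m \<longleftrightarrow>
     (\<forall>X. X \<subseteq> S \<longrightarrow> J X \<in> S \<and> (\<forall>x\<in>X. x \<le> J X)
                      \<and> (\<forall>u\<in>S. (\<forall>x\<in>X. x \<le> u) \<longrightarrow> J X \<le> u)) \<and>
     (\<forall>a\<in>S. \<forall>b\<in>S. m a b \<in> S) \<and>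
     (\<forall>a\<in>S. \<forall>b\<in>S. \<forall>c\<in>S. m (m a b) c = m a (m b c)) \<and>
     (\<forall>X a. X \<subseteq> S \<and> directed X \<and> a \<in> S \<longrightarrow>
        m (J X) a = J ((\<lambda>x. m x a) ` X) \<and> m a (J X) = J ((\<lambda>x. m a x) ` X))"

definition quasi_quantale :: "('a::complete_lattice \<Rightarrow> 'a \<Rightarrow> 'a) \<Rightarrow> bool" where
  "quasi_quantale m \<longleftrightarrow>
     (\<forall>a b c. m (m a b) c = m a (m b c)) \<and>
     (\<forall>X a. directed X \<longrightarrow>
        m (Sup X) a = Sup ((\<lambda>x. m x a) ` X) \<and> m a (Sup X) = Sup ((\<lambda>x. m a x) ` X))"

definition inflator :: "('a::order \<Rightarrow> 'a) \<Rightarrow> bool" where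
  "inflator s \<longleftrightarrow> mono s \<and> (\<forall>a. a \<le> s a)"

definition contextual_nucleus :: "('a::order \<Rightarrow> 'a \<Rightarrow> 'a) \<Rightarrow> ('a \<Rightarrow> 'a) \<Rightarrow> bool" where
  "contextual_nucleus m j \<longleftrightarrow> inflator j \<and> j \<circ> j = j \<and> (\<forall>a b. m (j a) (j b) \<le> j (m a b))"

definition left_unital_on :: "'a set \<Rightarrow> ('a \<Rightarrow> 'a \<Rightarrow> 'a) \<Rightarrow> 'a \<Rightarrow> bool" where
  "left_unital_on S m e \<longleftrightarrow> e \<in> S \<and> (\<forall>a\<in>S. m e a = a)"

end

theory Submission
  imports Defs
begin

text \<open>Since
  \<open>j\<close> swallows inner applications of itself, both inside joins and on either side of a product
  with a fixed point, associativity and directed distributivity of \<open>j (m a b)\<close> on the fixed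
  points reduce to the corresponding laws of \<open>m\<close> under one outer \<open>j\<close>; likewise
  \<open>j (m (j e) a) = j (m e a) = a\<close> for fixed points \<open>a\<close>.\<close>

lemma quasi_quantale_assoc:
  "quasi_quantale m \<Longrightarrow> m (m a b) c = m a (m b c)"
  unfolding quasi_quantale_def by blast

lemma quasi_quantale_Sup_directed:
  assumes "quasi_quantale m" and "directed X"
  shows "m (Sup X) a = Sup ((\<lambda>x. m x a) ` X)" and "m a (Sup X) = Sup ((\<lambda>x. m a x) ` X)"
  using assms unfolding quasi_quantale_def by blast+

text \<open>Monotonicity comes from distributivity over the directed set \<open>{x, y}\<close>.\<close>

lemma quasi_quantale_mono:
  assumes q: "quasi_quantale m" and "x \<le> y"
  shows quasi_quantale_mono_left: "m x a \<le> m y a"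
    and quasi_quantale_mono_right: "m a x \<le> m a y"
proof -
  have d: "directed {x, y}" unfolding directed_def using \<open>x \<le> y\<close> by auto
  have "Sup {x, y} = y" using \<open>x \<le> y\<close> by (simp add: sup_absorb2)
  then have "m y a = sup (m x a) (m y a)" and "m a y = sup (m a x) (m a y)"
    using quasi_quantale_Sup_directed[OF q d, of a] by simp_all
  then show "m x a \<le> m y a" and "m a x \<le> m a y" by (metis sup.cobounded1)+
qed

lemma contextual_nucleusD:
  assumes "contextual_nucleus m j"
  shows "mono j" and "a \<le> j a" and "j (j a) = j a" and "m (j a) (j b) \<le> j (m a b)"
  using assms unfolding contextual_nucleus_def inflator_def by (auto simp: fun_eq_iff)

lemma closure_Sup_image:
  fixes j :: "'a::complete_lattice \<Rightarrow> 'a"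
  assumes "mono j" and "\<And>a. a \<le> j a" and "\<And>a. j (j a) = j a"
  shows "j (Sup (j ` Y)) = j (Sup Y)"
proof (rule antisym)
  have "Sup (j ` Y) \<le> j (Sup Y)"
  proof (rule Sup_least)
    fix y assume "y \<in> j ` Y"
    then show "y \<le> j (Sup Y)" using \<open>mono j\<close> by (auto intro: monoD Sup_upper)
  qed
  then show "j (Sup (j ` Y)) \<le> j (Sup Y)" using assms by (metis monoD)
  have "Sup Y \<le> Sup (j ` Y)" by (rule Sup_mono) (use assms(2) in blast)
  then show "j (Sup Y) \<le> j (Sup (j ` Y))" by (rule monoD[OF \<open>mono j\<close>])
qed

lemma closure_fixed_points_Sup:
  fixes j :: "'a::complete_lattice \<Rightarrow> 'a"
  assumes "mono j" and "\<And>a. a \<le> j a" and "\<And>a. j (j a) = j a"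
  shows "j (Sup X) \<in> {a. j a = a}"
    and "x \<in> X \<Longrightarrow> x \<le> j (Sup X)"
    and "\<lbrakk>j u = u; \<And>x. x \<in> X \<Longrightarrow> x \<le> u\<rbrakk> \<Longrightarrow> j (Sup X) \<le> u"
proof -
  show "j (Sup X) \<in> {a. j a = a}" using assms(3) by simp
  show "x \<le> j (Sup X)" if "x \<in> X" using Sup_upper[OF that] assms(2) by (rule order_trans)
  assume "j u = u" and "\<And>x. x \<in> X \<Longrightarrow> x \<le> u"
  then have "j (Sup X) \<le> j u" by (intro monoD[OF \<open>mono j\<close>] Sup_least)
  then show "j (Sup X) \<le> u" using \<open>j u = u\<close> by simp
qed

lemma contextual_nucleus_mult_left:
  assumes q: "quasi_quantale m" and j: "contextual_nucleus m j" and "j c = c"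
  shows "j (m (j x) c) = j (m x c)"
proof (rule antisym)
  have "m (j x) c \<le> j (m x c)" using contextual_nucleusD(4)[OF j, of x c] \<open>j c = c\<close> by simp
  then show "j (m (j x) c) \<le> j (m x c)"
    using contextual_nucleusD(1,3)[OF j] by (metis monoD)
  show "j (m x c) \<le> j (m (j x) c)"
    using contextual_nucleusD(1,2)[OF j] quasi_quantale_mono_left[OF q] by (metis monoD)
qed

lemma contextual_nucleus_mult_right:
  assumes q: "quasi_quantale m" and j: "contextual_nucleus m j" and "j c = c"
  shows "j (m c (j x)) = j (m c x)"
proof (rule antisym)
  have "m c (j x) \<le> j (m c x)" using contextual_nucleusD(4)[OF j, of c x] \<open>j c = c\<close> by simp
  then show "j (m c (j x)) \<le> j (m c x)"
    using contextual_nucleusD(1,3)[OF j] by (metis monoD)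
  show "j (m c x) \<le> j (m c (j x))"
    using contextual_nucleusD(1,2)[OF j] quasi_quantale_mono_right[OF q] by (metis monoD)
qed

lemma quasi_quantale_on_fixed_points:
  assumes q: "quasi_quantale m" and j: "contextual_nucleus m j"
  shows "quasi_quantale_on {a. j a = a} (\<lambda>X. j (Sup X)) (\<lambda>a b. j (m a b))"
proof -
  note closure = contextual_nucleusD(1-3)[OF j]
  note left = contextual_nucleus_mult_left[OF q j] and right = contextual_nucleus_mult_right[OF q j]
  have assoc: "j (m (j (m a b)) c) = j (m a (j (m b c)))" if "j a = a" "j c = c" for a b c
    by (simp only: left[OF \<open>j c = c\<close>] right[OF \<open>j a = a\<close>] quasi_quantale_assoc[OF q])
  have Sup_left: "j (m (j (Sup X)) a) = j (Sup ((\<lambda>x. j (m x a)) ` X))"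
    and Sup_right: "j (m a (j (Sup X))) = j (Sup ((\<lambda>x. j (m a x)) ` X))"
    if "directed X" "j a = a" for X a
    using left[OF \<open>j a = a\<close>] right[OF \<open>j a = a\<close>]
      quasi_quantale_Sup_directed[OF q \<open>directed X\<close>] closure_Sup_image[OF closure]
    by (metis image_image)+
  show ?thesis
    unfolding quasi_quantale_on_def
    using closure_fixed_points_Sup[OF closure] closure(3) assoc Sup_left Sup_right
    by (simp add: subset_eq)
qed

lemma left_unital_on_fixed_points:
  assumes q: "quasi_quantale m" and j: "contextual_nucleus m j"
    and "left_unital_on UNIV m e"
  shows "left_unital_on {a. j a = a} (\<lambda>a b. j (m a b)) (j e)"
  using assms contextual_nucleusD(3)[OF j] contextual_nucleus_mult_left[OF q j]
  unfolding left_unital_on_def by auto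

theorem proposition3p9:
  fixes m :: "'a::complete_lattice \<Rightarrow> 'a \<Rightarrow> 'a" and j :: "'a \<Rightarrow> 'a"
  assumes "quasi_quantale m" and "contextual_nucleus m j"
  shows "quasi_quantale_on {a. j a = a} (\<lambda>X. j (Sup X)) (\<lambda>a b. j (m a b)) \<and>
           (\<forall>e. left_unital_on UNIV m e \<longrightarrow>
           quasi_quantale_on {a. j a = a} (\<lambda>X. j (Sup X)) (\<lambda>a b. j (m a b)) \<and>
           left_unital_on {a. j a = a} (\<lambda>a b. j (m a b)) (j e))"
  using quasi_quantale_on_fixed_points[OF assms] left_unital_on_fixed_points[OF assms]
  by blast

end
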